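(* Let $A\subseteq\mathbb{Z}^n$ be a subgroup and let $v=(v_1,\dots,v_n)\in A$ be nonzero with $v\mid w$ for all $w\in A$. Suppose $v_1,\dots,v_q>0$, $v_{q+1},\dots,v_s<0$ and $v_{s+1}=\dots=v_n=0$ for some $0\le q\le s\le n$, $s\ge1$. Let $a_1\le b_1,\dots,a_n\le b_n$ be integers and for $1\le i<j\le s$ put $a_{ij}=\lceil a_i/v_i\rceil-\lfloor b_j/v_j\rfloor$, $b_{ij}=\lfloor b_i/v_i\rfloor-\lceil a_j/v_j\rceil$ if $j\le q$; $a_{ij}=\lceil b_i/v_i\rceil-\lfloor a_j/v_j\rfloor$, $b_{ij}=\lfloor a_i/v_i\rfloor-\lceil b_j/v_j\rceil$ if $q<i$; $a_{ij}=\lceil a_i/v_i\rceil-\lfloor a_j/v_j\rfloor$, $b_{ij}=\lfloor b_i/v_i\rfloor-\lceil b_j/v_j\rceil$ if $i\le q<j$. Then there exists $x=(x_1,\dots,x_n)\in A$ with $a_k\le x_k\le b_k$ for all $k$ if and only if all of the following hold: $0\le\lfloor b_i/v_i\rfloor-\lceil a_i/v_i\rceil$ for all $1\le i\le q$; $0\le\lfloor a_j/v_j\rfloor-\lceil b_j/v_j\rceil$ for all $q<j\le s$; and there exists an element $(z_{12},\dots,z_{(s-1)s},z_1,\dots,z_{n-s})\in L_v(A)$ with $a_{ij}\le z_{ij}\le b_{ij}$ for all $1\le i<j\le s$ and $a_{s+k}\le z_k\le b_{s+k}$ for all $1\le k\le n-s$.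
   Context: For $v,w\in\mathbb{Z}^n$, $v\mid w$ means $v_i$ divides $w_i$ whenever $v_i\neq0$. With $v$ as in the statement (nonzero components exactly $v_1,\dots,v_s$), $L_v:\mathbb{Q}^n\to\mathbb{Q}^{\binom{s}{2}+n-s}$ is $L_v(t_1,\dots,t_n)=(\tfrac{t_1}{v_1}-\tfrac{t_2}{v_2},\dots,\tfrac{t_i}{v_i}-\tfrac{t_j}{v_j},\dots,\tfrac{t_{s-1}}{v_{s-1}}-\tfrac{t_s}{v_s},t_{s+1},\dots,t_n)$, the pairs $i<j$ in $\{1,\dots,s\}$ listed lexicographically; the coordinate indexed by $(i,j)$ is denoted $z_{ij}$ and the last $n-s$ coordinates $z_1,\dots,z_{n-s}$. *)

theory Defs
  imports Main "HOL.Rat"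
begin

text \<open>Vectors of Z^n are represented as functions nat => int, indexed by 1..n,
  vanishing outside {1..n}.\<close>

definition intvec :: "nat \<Rightarrow> (nat \<Rightarrow> int) set" where
  "intvec n = {x. \<forall>k. k \<notin> {1..n} \<longrightarrow> x k = 0}"

definition int_subgroup :: "nat \<Rightarrow> (nat \<Rightarrow> int) set \<Rightarrow> bool" where
  "int_subgroup n A \<longleftrightarrow> A \<subseteq> intvec n \<and> (\<lambda>_. 0) \<in> A \<and>
     (\<forall>x\<in>A. \<forall>y\<in>A. (\<lambda>k. x k + y k) \<in> A) \<and> (\<forall>x\<in>A. (\<lambda>k. - x k) \<in> A)"

definition vdvd :: "nat \<Rightarrow> (nat \<Rightarrow> int) \<Rightarrow> (nat \<Rightarrow> int) \<Rightarrow> bool" where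
  "vdvd n v w \<longleftrightarrow> (\<forall>i\<in>{1..n}. v i \<noteq> 0 \<longrightarrow> v i dvd w i)"

definition cdiv :: "int \<Rightarrow> int \<Rightarrow> int" where
  "cdiv x y = \<lceil>(of_int x / of_int y :: rat)\<rceil>"

definition fdiv :: "int \<Rightarrow> int \<Rightarrow> int" where
  "fdiv x y = \<lfloor>(of_int x / of_int y :: rat)\<rfloor>"

text \<open>An element of
  Q^(binom(s,2)+n-s) is represented as a pair: the coordinates z_ij (1<=i<j<=s)
  as a function of (i,j), and the coordinates z_1..z_(n-s); all other values are 0.\<close>
definition Lv :: "(nat \<Rightarrow> int) \<Rightarrow> nat \<Rightarrow> nat \<Rightarrow> (nat \<Rightarrow> int) \<Rightarrow>
    (nat \<Rightarrow> nat \<Rightarrow> rat) \<times> (nat \<Rightarrow> rat)" where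
  "Lv v s n t =
    ((\<lambda>i j. if 1 \<le> i \<and> i < j \<and> j \<le> s
             then of_int (t i) / of_int (v i) - of_int (t j) / of_int (v j) else 0),
     (\<lambda>k. if 1 \<le> k \<and> k \<le> n - s then of_int (t (s + k)) else 0))"

definition bnd_a :: "(nat \<Rightarrow> int) \<Rightarrow> (nat \<Rightarrow> int) \<Rightarrow> (nat \<Rightarrow> int) \<Rightarrow> nat \<Rightarrow> nat \<Rightarrow> nat \<Rightarrow> int" where
  "bnd_a v a b q i j =
    (if j \<le> q then cdiv (a i) (v i) - fdiv (b j) (v j)
     else if q < i then cdiv (b i) (v i) - fdiv (a j) (v j)
     else cdiv (a i) (v i) - fdiv (a j) (v j))"

definition bnd_b :: "(nat \<Rightarrow> int) \<Rightarrow> (nat \<Rightarrow> int) \<Rightarrow> (nat \<Rightarrow> int) \<Rightarrow> nat \<Rightarrow> nat \<Rightarrow> nat \<Rightarrow> int" where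
  "bnd_b v a b q i j =
    (if j \<le> q then fdiv (b i) (v i) - cdiv (a j) (v j)
     else if q < i then fdiv (a i) (v i) - cdiv (b j) (v j)
     else fdiv (b i) (v i) - cdiv (b j) (v j))"

end

theory Submission
  imports Defs
begin

text \<open>Every w \<in> A has w_i = v_i t_i with integers t_i (1 \<le> i \<le> s), and a_i \<le> w_i \<le> b_i says
  that t_i lies in an integer interval [l_i, u_i]. The coordinates z_ij of L_v(w) are the
  differences t_i - t_j, so the conditions on z say l_i - u_j \<le> t_i - t_j \<le> u_i - l_j; together
  with l_i \<le> u_i this is exactly the solvability of l_i \<le> t_i + m \<le> u_i in a single integer m.
  Since v \<in> A, replacing w by w + m v then yields the required point of A in the box.\<close>

lemma cdiv_le_iff_pos: "0 < v \<Longrightarrow> cdiv c v \<le> t \<longleftrightarrow> c \<le> v * t"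
  by (simp add: cdiv_def ceiling_le_iff pos_divide_le_eq mult.commute flip: of_int_mult)

lemma le_fdiv_iff_pos: "0 < v \<Longrightarrow> t \<le> fdiv c v \<longleftrightarrow> v * t \<le> c"
  by (simp add: fdiv_def le_floor_iff pos_le_divide_eq mult.commute flip: of_int_mult)

lemma cdiv_le_iff_neg: "v < 0 \<Longrightarrow> cdiv c v \<le> t \<longleftrightarrow> v * t \<le> c"
  by (simp add: cdiv_def ceiling_le_iff neg_divide_le_eq mult.commute flip: of_int_mult)

lemma le_fdiv_iff_neg: "v < 0 \<Longrightarrow> t \<le> fdiv c v \<longleftrightarrow> c \<le> v * t"
  by (simp add: fdiv_def le_floor_iff neg_le_divide_eq mult.commute flip: of_int_mult)

lemma int_subgroup_add_mult:
  assumes "int_subgroup n A" "v \<in> A" "y \<in> A"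
  shows "(\<lambda>k. y k + m * v k) \<in> A"
proof -
  have add: "(\<lambda>k. x k + w k) \<in> A" if "x \<in> A" "w \<in> A" for x w
    using assms(1) that unfolding int_subgroup_def by blast
  have neg_v: "(\<lambda>k. - v k) \<in> A"
    using assms(1,2) unfolding int_subgroup_def by blast
  show ?thesis
  proof (induction m rule: int_induct[where k = 0])
    case base
    then show ?case using assms(3) by simp
  next
    case (step1 i)
    from add[OF step1(2) assms(2)] show ?case by (simp add: algebra_simps)
  next
    case (step2 i)
    from add[OF step2(2) neg_v] show ?case by (simp add: algebra_simps)
  qed
qed

lemma pairwise_bounds_iff:
  fixes l u t :: "nat \<Rightarrow> 'a :: linordered_ab_group_add"
  shows "((\<forall>i\<in>{1..s}. l i \<le> u i) \<and>
          (\<forall>i j. 1 \<le> i \<and> i < j \<and> j \<le> s \<longrightarrow> l i - u j \<le> t i - t j \<and> t i - t j \<le> u i - l j)) \<longleftrightarrow>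
    (\<forall>i\<in>{1..s}. \<forall>j\<in>{1..s}. l i - t i \<le> u j - t j)"
proof -
  have lower: "l i - u j \<le> t i - t j \<longleftrightarrow> l i - t i \<le> u j - t j"
    and upper: "t i - t j \<le> u i - l j \<longleftrightarrow> l j - t j \<le> u i - t i" for i j
    by (simp_all add: algebra_simps)
  show ?thesis
  proof (intro iffI conjI ballI allI impI)
    fix i j assume bounds: "(\<forall>i\<in>{1..s}. l i \<le> u i) \<and>
      (\<forall>i j. 1 \<le> i \<and> i < j \<and> j \<le> s \<longrightarrow> l i - u j \<le> t i - t j \<and> t i - t j \<le> u i - l j)"
      and ij: "i \<in> {1..s}" "j \<in> {1..s}"
    consider "i < j" | "i = j" | "j < i" by linarith
    then show "l i - t i \<le> u j - t j"
      using bounds ij by cases (auto simp: lower upper)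
  qed (auto simp: lower upper, metis atLeastAtMost_iff le_diff_eq diff_add_cancel)
qed

lemma exists_common_shift:
  fixes l u t :: "'b \<Rightarrow> 'a :: linordered_ab_group_add"
  assumes "finite I" "I \<noteq> {}" "\<forall>i\<in>I. \<forall>j\<in>I. l i - t i \<le> u j - t j"
  shows "\<exists>m. \<forall>i\<in>I. l i \<le> t i + m \<and> t i + m \<le> u i"
proof -
  define m where "m = Max ((\<lambda>i. l i - t i) ` I)"
  have "m \<in> (\<lambda>i. l i - t i) ` I"
    unfolding m_def using assms(1,2) by (intro Max_in) auto
  then obtain i0 where "i0 \<in> I" "m = l i0 - t i0"
    by blast
  moreover have "l i - t i \<le> m" if "i \<in> I" for i
    unfolding m_def using assms(1) that by simp
  ultimately have "l i \<le> t i + m \<and> t i + m \<le> u i" if "i \<in> I" for i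
    using assms(3) that by (fastforce simp: algebra_simps)
  then show ?thesis by blast
qed

text \<open>The bounds l_i, u_i above; for i > q division by v_i < 0 swaps the roles of a_i and b_i.\<close>

definition quot_lower :: "(nat \<Rightarrow> int) \<Rightarrow> (nat \<Rightarrow> int) \<Rightarrow> (nat \<Rightarrow> int) \<Rightarrow> nat \<Rightarrow> nat \<Rightarrow> int" where
  "quot_lower v a b q i = (if i \<le> q then cdiv (a i) (v i) else cdiv (b i) (v i))"

definition quot_upper :: "(nat \<Rightarrow> int) \<Rightarrow> (nat \<Rightarrow> int) \<Rightarrow> (nat \<Rightarrow> int) \<Rightarrow> nat \<Rightarrow> nat \<Rightarrow> int" where
  "quot_upper v a b q i = (if i \<le> q then fdiv (b i) (v i) else fdiv (a i) (v i))"

lemma mult_in_interval_iff: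
  assumes "if i \<le> q then 0 < v i else v i < 0"
  shows "(a i \<le> v i * t \<and> v i * t \<le> b i) \<longleftrightarrow>
    (quot_lower v a b q i \<le> t \<and> t \<le> quot_upper v a b q i)"
  using assms
  by (auto simp: quot_lower_def quot_upper_def cdiv_le_iff_pos le_fdiv_iff_pos
      cdiv_le_iff_neg le_fdiv_iff_neg split: if_splits)

lemma bnd_a_eq: "i < j \<Longrightarrow> bnd_a v a b q i j = quot_lower v a b q i - quot_upper v a b q j"
  by (simp add: bnd_a_def quot_lower_def quot_upper_def)

lemma bnd_b_eq: "i < j \<Longrightarrow> bnd_b v a b q i j = quot_upper v a b q i - quot_lower v a b q j"
  by (simp add: bnd_b_def quot_lower_def quot_upper_def)

lemma quot_lower_le_upper_iff:
  assumes "q \<le> s"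
  shows "((\<forall>i\<in>{1..q}. 0 \<le> fdiv (b i) (v i) - cdiv (a i) (v i)) \<and>
          (\<forall>j\<in>{q<..s}. 0 \<le> fdiv (a j) (v j) - cdiv (b j) (v j))) \<longleftrightarrow>
    (\<forall>i\<in>{1..s}. quot_lower v a b q i \<le> quot_upper v a b q i)"
  using assms by (auto simp: quot_lower_def quot_upper_def)

lemma fst_Lv_dvd:
  assumes "1 \<le> i" "i < j" "j \<le> s" "v i dvd y i" "v j dvd y j"
  shows "fst (Lv v s n y) i j = of_int (y i div v i - y j div v j)"
  using assms by (simp add: Lv_def of_int_div)

lemma snd_Lv_in_box_iff:
  "(\<forall>k\<in>{1..n - s}. of_int (a (s + k)) \<le> snd (Lv v s n y) k \<and> snd (Lv v s n y) k \<le> of_int (b (s + k)))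
    \<longleftrightarrow> (\<forall>k\<in>{s<..n}. a k \<le> y k \<and> y k \<le> b k)"
proof
  assume box: "\<forall>k\<in>{1..n - s}. of_int (a (s + k)) \<le> snd (Lv v s n y) k \<and>
    snd (Lv v s n y) k \<le> of_int (b (s + k))"
  show "\<forall>k\<in>{s<..n}. a k \<le> y k \<and> y k \<le> b k"
  proof
    fix k assume "k \<in> {s<..n}"
    then have "k - s \<in> {1..n - s}" "s + (k - s) = k" by auto
    then have "of_int (a k) \<le> (of_int (y k) :: rat) \<and> (of_int (y k) :: rat) \<le> of_int (b k)"
      using box[rule_format, of "k - s"] by (simp add: Lv_def)
    then show "a k \<le> y k \<and> y k \<le> b k"
      by simp
  qed
qed (auto simp: Lv_def)

lemma Lv_in_box_iff:
  assumes "\<And>i. i \<in> {1..s} \<Longrightarrow> v i dvd y i"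
  shows "((\<forall>i j. 1 \<le> i \<and> i < j \<and> j \<le> s \<longrightarrow>
             of_int (bnd_a v a b q i j) \<le> fst (Lv v s n y) i j \<and>
             fst (Lv v s n y) i j \<le> of_int (bnd_b v a b q i j)) \<and>
          (\<forall>k\<in>{1..n - s}. of_int (a (s + k)) \<le> snd (Lv v s n y) k \<and>
             snd (Lv v s n y) k \<le> of_int (b (s + k)))) \<longleftrightarrow>
    ((\<forall>i j. 1 \<le> i \<and> i < j \<and> j \<le> s \<longrightarrow>
        quot_lower v a b q i - quot_upper v a b q j \<le> y i div v i - y j div v j \<and>
        y i div v i - y j div v j \<le> quot_upper v a b q i - quot_lower v a b q j) \<and>
     (\<forall>k\<in>{s<..n}. a k \<le> y k \<and> y k \<le> b k))"
proof -
  have pairs: "(of_int (bnd_a v a b q i j) \<le> fst (Lv v s n y) i j \<and>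
                fst (Lv v s n y) i j \<le> of_int (bnd_b v a b q i j)) \<longleftrightarrow>
    (quot_lower v a b q i - quot_upper v a b q j \<le> y i div v i - y j div v j \<and>
     y i div v i - y j div v j \<le> quot_upper v a b q i - quot_lower v a b q j)"
    if "1 \<le> i" "i < j" "j \<le> s" for i j
    using that assms by (simp add: fst_Lv_dvd bnd_a_eq bnd_b_eq flip: of_int_diff)
  show ?thesis
    unfolding snd_Lv_in_box_iff using pairs by blast
qed

lemma pairwise_bounds_if_in_box:
  fixes s n :: nat and a b v x l u :: "nat \<Rightarrow> int"
  assumes "s \<le> n"
    and dvd: "\<And>i. i \<in> {1..s} \<Longrightarrow> v i dvd x i"
    and interval: "\<forall>i\<in>{1..s}. \<forall>t. (a i \<le> v i * t \<and> v i * t \<le> b i) \<longleftrightarrow> (l i \<le> t \<and> t \<le> u i)"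
    and x_box: "\<forall>k\<in>{1..n}. a k \<le> x k \<and> x k \<le> b k"
  shows "\<forall>i\<in>{1..s}. \<forall>j\<in>{1..s}. l i - x i div v i \<le> u j - x j div v j"
proof -
  have bounds: "l i \<le> x i div v i \<and> x i div v i \<le> u i" if "i \<in> {1..s}" for i
  proof -
    have "i \<in> {1..n}"
      using that \<open>s \<le> n\<close> by auto
    then have "a i \<le> v i * (x i div v i) \<and> v i * (x i div v i) \<le> b i"
      using x_box dvd[OF that] by simp
    then show ?thesis
      using interval that by blast
  qed
  show ?thesis
  proof (intro ballI)
    fix i j assume "i \<in> {1..s}" "j \<in> {1..s}"
    then show "l i - x i div v i \<le> u j - x j div v j"
      using bounds[of i] bounds[of j] by linarith
  qed
qed

lemma in_box_if_pairwise_bounds: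
  assumes "int_subgroup n A" "v \<in> A" "y \<in> A" "1 \<le> s" "\<forall>k\<in>{s<..n}. v k = 0"
    and dvd: "\<And>i. i \<in> {1..s} \<Longrightarrow> v i dvd y i"
    and interval: "\<forall>i\<in>{1..s}. \<forall>t. (a i \<le> v i * t \<and> v i * t \<le> b i) \<longleftrightarrow> (l i \<le> t \<and> t \<le> u i)"
    and pairwise: "\<forall>i\<in>{1..s}. \<forall>j\<in>{1..s}. l i - y i div v i \<le> u j - y j div v j"
    and outer: "\<forall>k\<in>{s<..n}. a k \<le> y k \<and> y k \<le> b k"
  shows "\<exists>x\<in>A. \<forall>k\<in>{1..n}. a k \<le> x k \<and> x k \<le> b k"
proof -
  obtain m where shifted: "\<forall>i\<in>{1..s}. l i \<le> y i div v i + m \<and> y i div v i + m \<le> u i"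
    using exists_common_shift[OF _ _ pairwise] \<open>1 \<le> s\<close> by auto
  define x where "x k = y k + m * v k" for k
  have "x \<in> A"
    unfolding x_def using int_subgroup_add_mult[OF assms(1-3)] .
  moreover have "a k \<le> x k \<and> x k \<le> b k" if "k \<in> {1..n}" for k
  proof (cases "k \<le> s")
    case True
    then have "k \<in> {1..s}"
      using that by simp
    moreover from this have "x k = v k * (y k div v k + m)"
      using dvd by (simp add: x_def algebra_simps)
    ultimately show ?thesis
      using interval shifted by simp
  next
    case False
    then show ?thesis
      using assms(5) outer that by (simp add: x_def)
  qed
  ultimately show ?thesis
    by blast
qed

lemma exists_in_box_iff_pairwise:
  assumes "int_subgroup n A" "v \<in> A" "1 \<le> s" "s \<le> n" "\<forall>k\<in>{s<..n}. v k = 0"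
    and dvd: "\<And>y i. y \<in> A \<Longrightarrow> i \<in> {1..s} \<Longrightarrow> v i dvd y i"
    and interval: "\<forall>i\<in>{1..s}. \<forall>t. (a i \<le> v i * t \<and> v i * t \<le> b i) \<longleftrightarrow> (l i \<le> t \<and> t \<le> u i)"
  shows "(\<exists>x\<in>A. \<forall>k\<in>{1..n}. a k \<le> x k \<and> x k \<le> b k) \<longleftrightarrow>
    (\<exists>y\<in>A. (\<forall>i\<in>{1..s}. \<forall>j\<in>{1..s}. l i - y i div v i \<le> u j - y j div v j) \<and>
             (\<forall>k\<in>{s<..n}. a k \<le> y k \<and> y k \<le> b k))"
proof
  assume "\<exists>x\<in>A. \<forall>k\<in>{1..n}. a k \<le> x k \<and> x k \<le> b k"
  then obtain x where "x \<in> A" and x_box: "\<forall>k\<in>{1..n}. a k \<le> x k \<and> x k \<le> b k"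
    by blast
  moreover have "\<forall>i\<in>{1..s}. \<forall>j\<in>{1..s}. l i - x i div v i \<le> u j - x j div v j"
    using pairwise_bounds_if_in_box[OF \<open>s \<le> n\<close> dvd[OF \<open>x \<in> A\<close>] interval x_box] .
  moreover have "\<forall>k\<in>{s<..n}. a k \<le> x k \<and> x k \<le> b k"
    using x_box by simp
  ultimately show "\<exists>y\<in>A. (\<forall>i\<in>{1..s}. \<forall>j\<in>{1..s}. l i - y i div v i \<le> u j - y j div v j) \<and>
             (\<forall>k\<in>{s<..n}. a k \<le> y k \<and> y k \<le> b k)"
    by blast
next
  assume "\<exists>y\<in>A. (\<forall>i\<in>{1..s}. \<forall>j\<in>{1..s}. l i - y i div v i \<le> u j - y j div v j) \<and>
             (\<forall>k\<in>{s<..n}. a k \<le> y k \<and> y k \<le> b k)"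
  then obtain y where "y \<in> A"
    and "\<forall>i\<in>{1..s}. \<forall>j\<in>{1..s}. l i - y i div v i \<le> u j - y j div v j"
    and "\<forall>k\<in>{s<..n}. a k \<le> y k \<and> y k \<le> b k"
    by blast
  then show "\<exists>x\<in>A. \<forall>k\<in>{1..n}. a k \<le> x k \<and> x k \<le> b k"
    using in_box_if_pairwise_bounds[OF assms(1,2) \<open>y \<in> A\<close> assms(3,5) dvd[OF \<open>y \<in> A\<close>] interval]
    by blast
qed

theorem mainTheorem2:
  fixes n q s :: nat and A :: "(nat \<Rightarrow> int) set" and v a b :: "nat \<Rightarrow> int"
  assumes "int_subgroup n A"
    and "v \<in> A" and "v \<noteq> (\<lambda>_. 0)"
    and "\<forall>w\<in>A. vdvd n v w"
    and "q \<le> s" and "s \<le> n" and "1 \<le> s"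
    and "\<forall>i\<in>{1..q}. v i > 0"
    and "\<forall>i\<in>{q<..s}. v i < 0"
    and "\<forall>i\<in>{s<..n}. v i = 0"
    and "\<forall>k\<in>{1..n}. a k \<le> b k"
  shows "(\<exists>x\<in>A. \<forall>k\<in>{1..n}. a k \<le> x k \<and> x k \<le> b k) \<longleftrightarrow>
    ((\<forall>i\<in>{1..q}. 0 \<le> fdiv (b i) (v i) - cdiv (a i) (v i)) \<and>
     (\<forall>j\<in>{q<..s}. 0 \<le> fdiv (a j) (v j) - cdiv (b j) (v j)) \<and>
     (\<exists>z\<in>Lv v s n ` A.
        (\<forall>i j. 1 \<le> i \<and> i < j \<and> j \<le> s \<longrightarrow>
           of_int (bnd_a v a b q i j) \<le> fst z i j \<and> fst z i j \<le> of_int (bnd_b v a b q i j)) \<and>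
        (\<forall>k\<in>{1..n - s}. of_int (a (s + k)) \<le> snd z k \<and> snd z k \<le> of_int (b (s + k)))))"
proof -
  let "?lhs \<longleftrightarrow> ?rhs" = ?thesis
  let ?l = "quot_lower v a b q" and ?u = "quot_upper v a b q"
  have sign: "if i \<le> q then 0 < v i else v i < 0" if "i \<in> {1..s}" for i
    using assms(8,9) that by auto
  have dvd: "v i dvd y i" if "y \<in> A" "i \<in> {1..s}" for y i
  proof -
    have "v i \<noteq> 0"
      using sign[OF that(2)] by (auto split: if_splits)
    then show ?thesis
      using assms(4,6) that unfolding vdvd_def by auto
  qed
  have interval: "\<forall>i\<in>{1..s}. \<forall>t. (a i \<le> v i * t \<and> v i * t \<le> b i) \<longleftrightarrow> (?l i \<le> t \<and> t \<le> ?u i)"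
    using mult_in_interval_iff sign by blast
  have "?lhs \<longleftrightarrow>
    (\<exists>y\<in>A. (\<forall>i\<in>{1..s}. \<forall>j\<in>{1..s}. ?l i - y i div v i \<le> ?u j - y j div v j) \<and>
             (\<forall>k\<in>{s<..n}. a k \<le> y k \<and> y k \<le> b k))"
    using assms(1,2,7,6,10) dvd interval by (rule exists_in_box_iff_pairwise)
  also have "\<dots> \<longleftrightarrow> (\<forall>i\<in>{1..s}. ?l i \<le> ?u i) \<and>
    (\<exists>y\<in>A. (\<forall>i j. 1 \<le> i \<and> i < j \<and> j \<le> s \<longrightarrow>
        ?l i - ?u j \<le> y i div v i - y j div v j \<and> y i div v i - y j div v j \<le> ?u i - ?l j) \<and>
      (\<forall>k\<in>{s<..n}. a k \<le> y k \<and> y k \<le> b k))"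
    unfolding pairwise_bounds_iff[symmetric] using \<open>v \<in> A\<close> by blast
  also have "\<dots> \<longleftrightarrow> ?rhs"
    unfolding quot_lower_le_upper_iff[OF assms(5), symmetric] conj_assoc bex_simps(7)
    by (intro conj_cong bex_cong refl Lv_in_box_iff[symmetric] dvd)
  finally show ?thesis .
qed

end
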